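(* Let $f:\mathbb{R}^n\to\mathbb{R}^n$ be smooth, $N\ge2$, and $A$ a real $n\times n$ matrix, and consider the unidirectional ring network $$\dot{x}_i=f(x_i)+A(x_{i-1}-x_i),\qquad i=1,\dots,N,$$ with indices modulo $N$ (so $x_0=x_N$). Suppose that there is $\lambda>0$ with $(J_f(z))_s+A_s\preceq-\lambda I$ for all $z\in\mathbb{R}^n$, that $A_s\succ0$, and that $4A_s-AA_s^{-1}A^T\succeq0$. Then for every initial condition, $\|x_i(t)-x_j(t)\|\to0$ exponentially as $t\to\infty$ for all $i,j$ (complete synchronization).
   Context: $J_f(z)=\frac{\partial f}{\partial z}(z)$ is the Jacobian of $f$. For a square matrix $M$, $M_s=\tfrac12(M+M^T)$. For symmetric matrices, $M\succ0$ ($\succeq0$) means positive definite (semidefinite), and $M\preceq N$ means $N-M\succeq0$. *)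

theory Defs
  imports "HOL-Analysis.Analysis"
begin

fun Ck_map :: "nat \<Rightarrow> ('a::real_normed_vector \<Rightarrow> 'a) \<Rightarrow> bool" where
  "Ck_map 0 f = continuous_on UNIV f"
| "Ck_map (Suc k) f =
     (f differentiable_on UNIV \<and> (\<forall>v. Ck_map k (\<lambda>z. frechet_derivative f (at z) v)))"

definition smooth_map :: "('a::real_normed_vector \<Rightarrow> 'a) \<Rightarrow> bool" where
  "smooth_map f \<longleftrightarrow> (\<forall>k. Ck_map k f)"

definition jacobian :: "(real^'n \<Rightarrow> real^'n) \<Rightarrow> real^'n \<Rightarrow> real^'n^'n" where
  "jacobian f z = matrix (frechet_derivative f (at z))"

definition sym_part :: "real^'n^'n \<Rightarrow> real^'n^'n" where
  "sym_part M = (1/2) *\<^sub>R (M + transpose M)"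

definition psd :: "real^'n^'n \<Rightarrow> bool" where
  "psd M \<longleftrightarrow> (\<forall>v. 0 \<le> v \<bullet> (M *v v))"

definition pd :: "real^'n^'n \<Rightarrow> bool" where
  "pd M \<longleftrightarrow> (\<forall>v. v \<noteq> 0 \<longrightarrow> 0 < v \<bullet> (M *v v))"

definition loewner_le :: "real^'n^'n \<Rightarrow> real^'n^'n \<Rightarrow> bool" where
  "loewner_le M N \<longleftrightarrow> psd (N - M)"

end

theory Submission
  imports Defs
begin

text \<open>Let \<open>e i = x i - x (i + 1)\<close> be the edge errors of the ring. Since every node carries the
  same linear coupling, \<open>e i' = f (x i) - f (x (i + 1)) + A (e (i - 1) - e i)\<close>. Integrating the
  Jacobian bound along the segment from \<open>x (i + 1)\<close> to \<open>x i\<close> gives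
  \<open>\<langle>e i, f (x i) - f (x (i + 1))\<rangle> \<le> -\<lambda> |e i|\<^sup>2 - \<langle>e i, A\<^sub>s e i\<rangle>\<close>, and completing the square shows
  that \<open>4 A\<^sub>s - A A\<^sub>s\<^sup>-\<^sup>1 A\<^sup>T \<succeq> 0\<close> is exactly what makes \<open>\<langle>v, A w\<rangle> \<le> \<langle>v, A\<^sub>s v\<rangle> + \<langle>w, A\<^sub>s w\<rangle>\<close>.
  Summed around the ring the \<open>A\<^sub>s\<close>-terms cancel, so \<open>V = \<Sum>i. |e i|\<^sup>2\<close> satisfies \<open>V' \<le> -2\<lambda> V\<close>
  and decays like \<open>exp (-2\<lambda>t)\<close>; finally every \<open>x i - x j\<close> is a sum of fewer than \<open>N\<close> edge errors.\<close>

lemma pd_imp_psd: "pd M \<Longrightarrow> psd M"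
  unfolding pd_def psd_def by (metis inner_zero_left order_refl less_imp_le)

lemma pd_imp_invertible:
  fixes M :: "real^'n^'n"
  assumes "pd M"
  shows "invertible M"
proof -
  have "\<forall>x. M *v x = 0 \<longrightarrow> x = 0"
    using assms unfolding pd_def by (metis inner_zero_right less_irrefl)
  then show ?thesis
    using matrix_left_invertible_ker invertible_left_inverse by blast
qed

lemma matrix_mul_matrix_inv_right:
  assumes "invertible M"
  shows "M ** matrix_inv M = mat 1"
  using assms unfolding invertible_def matrix_inv_def by (rule someI_ex[THEN conjunct1])

lemma inner_transpose_mv: "(u::real^'n) \<bullet> (transpose M *v v) = v \<bullet> (M *v u)"
  by (metis dot_lmul_matrix inner_commute transpose_matrix_vector)

lemma transpose_sym_part: "transpose (sym_part M) = sym_part M"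
  unfolding sym_part_def by (simp add: transpose_def vec_eq_iff)

lemma inner_sym_part_mv_self: "(v::real^'n) \<bullet> (sym_part M *v v) = v \<bullet> (M *v v)"
  unfolding sym_part_def
  by (simp add: scaleR_matrix_vector_assoc[symmetric] matrix_vector_mult_add_rdistrib
      inner_add_right inner_transpose_mv del: transpose_matrix_vector)

lemma inner_sym_part_mv_commute: "(u::real^'n) \<bullet> (sym_part M *v v) = v \<bullet> (sym_part M *v u)"
  by (metis inner_transpose_mv transpose_sym_part)

text \<open>Completing the square: with \<open>z = A\<^sub>s\<^sup>-\<^sup>1 A\<^sup>T v\<close>, the term \<open>\<langle>v, A w\<rangle>\<close> is \<open>\<langle>w, A\<^sub>s z\<rangle>\<close> and
  \<open>0 \<le> \<langle>w - z/2, A\<^sub>s (w - z/2)\<rangle>\<close>, while the hypothesis on \<open>A\<close> says \<open>\<langle>z, A\<^sub>s z\<rangle> \<le> 4\<langle>v, A\<^sub>s v\<rangle>\<close>.\<close>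

lemma inner_mv_le_sym_part_forms:
  fixes A :: "real^'n^'n"
  assumes pd: "pd (sym_part A)"
    and cond: "psd (4 *\<^sub>R sym_part A - A ** matrix_inv (sym_part A) ** transpose A)"
  shows "v \<bullet> (A *v w) \<le> v \<bullet> (sym_part A *v v) + w \<bullet> (sym_part A *v w)"
proof -
  define B where "B = sym_part A"
  define z where "z = matrix_inv B *v (transpose A *v v)"
  have "B ** matrix_inv B = mat 1"
    unfolding B_def using pd by (intro matrix_mul_matrix_inv_right pd_imp_invertible)
  then have Bz: "B *v z = transpose A *v v"
    unfolding z_def by (simp add: matrix_vector_mul_assoc matrix_mul_assoc del: transpose_matrix_vector)
  have vAw: "v \<bullet> (A *v w) = w \<bullet> (B *v z)"
    using Bz inner_transpose_mv[of w A v] by simp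
  have "v \<bullet> ((A ** matrix_inv B ** transpose A) *v v) = z \<bullet> (B *v z)"
    using Bz inner_transpose_mv[of z A v]
    by (simp add: z_def matrix_vector_mul_assoc matrix_mul_assoc del: transpose_matrix_vector)
  moreover have "0 \<le> v \<bullet> ((4 *\<^sub>R B - A ** matrix_inv B ** transpose A) *v v)"
    using cond unfolding psd_def B_def by blast
  ultimately have z_bound: "z \<bullet> (B *v z) \<le> 4 * (v \<bullet> (B *v v))"
    by (simp add: matrix_vector_mult_diff_rdistrib scaleR_matrix_vector_assoc[symmetric]
        inner_diff_right del: transpose_matrix_vector)
  have "0 \<le> (w - (1/2) *\<^sub>R z) \<bullet> (B *v (w - (1/2) *\<^sub>R z))"
    using pd_imp_psd[OF pd] unfolding psd_def B_def by blast
  also have "\<dots> = w \<bullet> (B *v w) - w \<bullet> (B *v z) + (1/4) * (z \<bullet> (B *v z))"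
    using inner_sym_part_mv_commute[of z A w]
    by (simp add: B_def algebra_simps del: transpose_matrix_vector)
  finally show ?thesis
    using vAw z_bound unfolding B_def by linarith
qed

lemma inner_diff_le_of_derivative_bound:
  fixes f :: "'a::real_inner \<Rightarrow> 'a"
  assumes deriv: "\<And>z. (f has_derivative f' z) (at z)"
    and bound: "\<And>z. (u - w) \<bullet> f' z (u - w) \<le> q"
  shows "(u - w) \<bullet> (f u - f w) \<le> q"
proof -
  define d where "d = u - w"
  define h where "h s = d \<bullet> f (w + s *\<^sub>R d)" for s
  have h_deriv: "DERIV h s :> d \<bullet> f' (w + s *\<^sub>R d) d" for s
  proof -
    have "((\<lambda>s. w + s *\<^sub>R d) has_derivative (\<lambda>r. r *\<^sub>R d)) (at s)"
      by (auto intro!: derivative_eq_intros)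
    from has_derivative_compose[OF this deriv]
    have "(h has_derivative (\<lambda>r. d \<bullet> f' (w + s *\<^sub>R d) (r *\<^sub>R d))) (at s)"
      unfolding h_def by (rule has_derivative_inner_right)
    moreover have "linear (f' (w + s *\<^sub>R d))"
      using deriv has_derivative_linear by blast
    ultimately show ?thesis
      by (simp add: has_field_derivative_def linear_scale mult.commute[of _ "d \<bullet> _"])
  qed
  then obtain s where "h 1 - h 0 = (1 - 0) * (d \<bullet> f' (w + s *\<^sub>R d) d)"
    using MVT2[of 0 1 h, OF _ h_deriv] by auto
  then show ?thesis
    using bound unfolding h_def d_def by (simp add: inner_diff_right)
qed

lemma smooth_map_has_derivative_jacobian:
  fixes f :: "real^'n \<Rightarrow> real^'n"
  assumes "smooth_map f"
  shows "(f has_derivative (\<lambda>h. Defs.jacobian f z *v h)) (at z)"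
proof -
  have "Ck_map 1 f"
    using assms unfolding smooth_map_def by blast
  then have "f differentiable (at z)"
    by (auto simp: differentiable_on_def)
  then show ?thesis
    using jacobian_works[of f "at z"] by (simp add: Defs.jacobian_def Cartesian_Euclidean_Space.jacobian_def)
qed

lemma inner_mv_le_of_loewner_le:
  fixes J A :: "real^'n^'n"
  assumes "loewner_le (sym_part J + sym_part A) (- lam *\<^sub>R mat 1)"
  shows "d \<bullet> (J *v d) \<le> - lam * (d \<bullet> d) - d \<bullet> (sym_part A *v d)"
proof -
  have "0 \<le> d \<bullet> ((- lam *\<^sub>R mat 1 - (sym_part J + sym_part A)) *v d)"
    using assms unfolding loewner_le_def psd_def by blast
  also have "\<dots> = - lam * (d \<bullet> d) - d \<bullet> (J *v d) - d \<bullet> (sym_part A *v d)"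
    by (simp add: matrix_vector_mult_diff_rdistrib matrix_vector_mult_add_rdistrib
        scaleR_matrix_vector_assoc[symmetric] inner_diff_right inner_add_right inner_sym_part_mv_self
        del: transpose_matrix_vector scaleR_minus_left)
  finally show ?thesis by linarith
qed

lemma inner_diff_le_of_contracting_jacobian:
  fixes f :: "real^'n \<Rightarrow> real^'n" and A :: "real^'n^'n"
  assumes smooth: "smooth_map f"
    and contr: "\<forall>z. loewner_le (sym_part (Defs.jacobian f z) + sym_part A) (- lam *\<^sub>R mat 1)"
  shows "(u - w) \<bullet> (f u - f w) \<le> - lam * ((u - w) \<bullet> (u - w)) - (u - w) \<bullet> (sym_part A *v (u - w))"
proof (rule inner_diff_le_of_derivative_bound)
  show "(f has_derivative (\<lambda>h. Defs.jacobian f z *v h)) (at z)" for z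
    using smooth by (rule smooth_map_has_derivative_jacobian)
  show "(u - w) \<bullet> (Defs.jacobian f z *v (u - w))
      \<le> - lam * ((u - w) \<bullet> (u - w)) - (u - w) \<bullet> (sym_part A *v (u - w))" for z
    using contr by (intro inner_mv_le_of_loewner_le) blast
qed

lemma ring_succ_pred:
  assumes "i < N"
  shows "Suc ((i + N - 1) mod N) mod N = i"
proof -
  have "Suc (i + N - 1) = i + N"
    using assms by simp
  then show ?thesis
    using assms by (simp add: mod_Suc_eq)
qed

lemma ring_pred_succ:
  assumes "i < N"
  shows "(Suc i mod N + N - 1) mod N = i"
proof -
  have "(Suc i mod N + (N - 1)) mod N = (Suc i + (N - 1)) mod N"
    by (rule mod_add_left_eq)
  moreover have "Suc i + (N - 1) = i + N"
    using assms by simp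
  ultimately show ?thesis
    using assms by simp
qed

lemma sum_ring_pred:
  fixes N :: nat
  shows "(\<Sum>i<N. g ((i + N - 1) mod N)) = (\<Sum>i<N. g i)"
  by (rule sum.reindex_bij_witness[of _ "\<lambda>i. Suc i mod N" "\<lambda>i. (i + N - 1) mod N"])
    (auto simp: ring_succ_pred ring_pred_succ simp del: One_nat_def)

text \<open>Each coupling term \<open>\<langle>e i, A e (i - 1)\<rangle>\<close> is paid for by \<open>\<langle>e i, B e i\<rangle> + \<langle>e (i - 1), B e (i - 1)\<rangle>\<close>;
  around the ring the second summands are a rearrangement of the first, and the two copies cancel
  against \<open>-\<langle>e i, A e i\<rangle>\<close> and the \<open>-\<langle>e i, B e i\<rangle>\<close> coming from the nodes.\<close>

lemma sum_inner_ring_coupling_le: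
  fixes A B :: "real^'n^'n" and e g :: "nat \<Rightarrow> real^'n"
  assumes node: "\<And>i. i < N \<Longrightarrow> e i \<bullet> g i \<le> - lam * (e i \<bullet> e i) - e i \<bullet> (B *v e i)"
    and coupling: "\<And>v w. v \<bullet> (A *v w) \<le> v \<bullet> (B *v v) + w \<bullet> (B *v w)"
    and diagonal: "\<And>v. v \<bullet> (B *v v) = v \<bullet> (A *v v)"
  shows "(\<Sum>i<N. e i \<bullet> (g i + A *v (e ((i + N - 1) mod N) - e i))) \<le> - lam * (\<Sum>i<N. e i \<bullet> e i)"
proof -
  let ?p = "\<lambda>i. (i + N - 1) mod N"
  have "(\<Sum>i<N. e i \<bullet> (g i + A *v (e (?p i) - e i)))
      = (\<Sum>i<N. e i \<bullet> g i + e i \<bullet> (A *v e (?p i)) - e i \<bullet> (B *v e i))"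
    by (intro sum.cong refl)
      (simp add: inner_add_right inner_diff_right matrix_vector_mult_diff_distrib diagonal)
  also have "\<dots> \<le> (\<Sum>i<N. (- lam * (e i \<bullet> e i) - e i \<bullet> (B *v e i))
        + (e i \<bullet> (B *v e i) + e (?p i) \<bullet> (B *v e (?p i))) - e i \<bullet> (B *v e i))"
    by (intro sum_mono diff_right_mono add_mono node coupling) simp
  also have "\<dots> = - lam * (\<Sum>i<N. e i \<bullet> e i) - (\<Sum>i<N. e i \<bullet> (B *v e i))
       + (\<Sum>i<N. e (?p i) \<bullet> (B *v e (?p i)))"
    by (simp add: sum.distrib sum_subtractf sum_distrib_left sum_negf algebra_simps)
  also have "(\<Sum>i<N. e (?p i) \<bullet> (B *v e (?p i))) = (\<Sum>i<N. e i \<bullet> (B *v e i))"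
    by (rule sum_ring_pred)
  finally show ?thesis by simp
qed

definition ring_edge :: "nat \<Rightarrow> (nat \<Rightarrow> 'a::ab_group_add) \<Rightarrow> nat \<Rightarrow> 'a" where
  "ring_edge N y i = y i - y (Suc i mod N)"

lemma ring_edge_has_vector_derivative:
  fixes x :: "real \<Rightarrow> nat \<Rightarrow> real^'n" and F :: "real^'n \<Rightarrow> real^'n" and A :: "real^'n^'n"
  assumes ode: "\<forall>i<N. \<forall>t\<ge>0. ((\<lambda>s. x s i) has_vector_derivative
                 (F (x t i) + A *v (x t ((i + N - 1) mod N) - x t i))) (at t within {0..})"
    and "i < N" "t \<ge> 0"
  shows "((\<lambda>s. ring_edge N (x s) i) has_vector_derivative
           F (x t i) - F (x t (Suc i mod N))
           + A *v (ring_edge N (x t) ((i + N - 1) mod N) - ring_edge N (x t) i)) (at t within {0..})"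
proof -
  let ?s = "Suc i mod N" and ?p = "(i + N - 1) mod N"
  have deriv: "((\<lambda>s. x s i - x s ?s) has_vector_derivative
      (F (x t i) + A *v (x t ?p - x t i)) - (F (x t ?s) + A *v (x t ((?s + N - 1) mod N) - x t ?s)))
      (at t within {0..})"
    using assms by (intro has_vector_derivative_diff) auto
  have "(?s + N - 1) mod N = i" "Suc ?p mod N = i"
    using \<open>i < N\<close> by (simp_all only: ring_pred_succ ring_succ_pred)
  then have eq: "(F (x t i) + A *v (x t ?p - x t i)) - (F (x t ?s) + A *v (x t ((?s + N - 1) mod N) - x t ?s))
      = F (x t i) - F (x t ?s) + A *v ((x t ?p - x t (Suc ?p mod N)) - (x t i - x t ?s))"
    by (simp only: matrix_vector_mult_diff_distrib)
      (simp add: algebra_simps del: matrix_vector_mult_diff_distrib matrix_vector_right_distrib)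
  show ?thesis
    using deriv unfolding eq ring_edge_def .
qed

lemma has_real_derivative_sum_inner_self:
  fixes e :: "real \<Rightarrow> 'i \<Rightarrow> 'a::real_inner"
  assumes "\<And>i. i \<in> I \<Longrightarrow> ((\<lambda>s. e s i) has_vector_derivative e' i) (at t within S)"
  shows "((\<lambda>s. \<Sum>i\<in>I. e s i \<bullet> e s i) has_real_derivative (\<Sum>i\<in>I. 2 * (e t i \<bullet> e' i))) (at t within S)"
proof (rule DERIV_sum)
  fix i
  assume "i \<in> I"
  then have "((\<lambda>s. e s i) has_derivative (\<lambda>h. h *\<^sub>R e' i)) (at t within S)"
    using assms unfolding has_vector_derivative_def by blast
  from has_derivative_inner[OF this this]
  show "((\<lambda>s. e s i \<bullet> e s i) has_real_derivative 2 * (e t i \<bullet> e' i)) (at t within S)"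
    unfolding has_field_derivative_def
    by (rule has_derivative_eq_rhs) (auto simp: fun_eq_iff inner_commute algebra_simps)
qed

lemma le_initial_of_nonpos_derivative_within:
  fixes W :: "real \<Rightarrow> real"
  assumes deriv: "\<And>s. s \<ge> 0 \<Longrightarrow> \<exists>y. (W has_real_derivative y) (at s within {0..}) \<and> y \<le> 0"
    and "t \<ge> 0"
  shows "W t \<le> W 0"
proof (rule DERIV_nonpos_imp_decreasing_open[OF \<open>t \<ge> 0\<close>])
  fix s :: real
  assume "0 < s" "s < t"
  then have "at s within {0..} = at s"
    by (intro at_within_interior) simp
  then show "\<exists>y. (W has_real_derivative y) (at s) \<and> y \<le> 0"
    using deriv[of s] \<open>0 < s\<close> by auto
next
  have "continuous (at s within {0..}) W" if "s \<ge> 0" for s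
    using deriv[OF that] by (auto intro: DERIV_continuous)
  then show "continuous_on {0..t} W"
    unfolding continuous_on_eq_continuous_within
    by (meson atLeastAtMost_iff atLeast_iff continuous_within_subset subsetI)
qed

text \<open>The comparison argument of Gronwall's inequality: \<open>e\<^sup>c\<^sup>t V(t)\<close> is nonincreasing.\<close>

lemma le_exp_decay_of_derivative_le:
  fixes V V' :: "real \<Rightarrow> real"
  assumes deriv: "\<And>s. s \<ge> 0 \<Longrightarrow> (V has_real_derivative V' s) (at s within {0..})"
    and bound: "\<And>s. s \<ge> 0 \<Longrightarrow> V' s \<le> - c * V s"
    and "t \<ge> 0"
  shows "V t \<le> V 0 * exp (- c * t)"
proof -
  define W where "W s = exp (c * s) * V s" for s
  have "W t \<le> W 0"
  proof (rule le_initial_of_nonpos_derivative_within[OF _ \<open>t \<ge> 0\<close>])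
    fix s :: real
    assume s: "s \<ge> 0"
    have "(W has_real_derivative exp (c * s) * (c * V s + V' s)) (at s within {0..})"
      unfolding W_def by (auto intro!: derivative_eq_intros deriv[OF s] simp: algebra_simps)
    moreover have "exp (c * s) * (c * V s + V' s) \<le> 0"
      using bound[OF s] by (intro mult_nonneg_nonpos) auto
    ultimately show "\<exists>y. (W has_real_derivative y) (at s within {0..}) \<and> y \<le> 0"
      by blast
  qed
  then have "exp (- c * t) * (exp (c * t) * V t) \<le> exp (- c * t) * V 0"
    unfolding W_def by (intro mult_left_mono) auto
  then show ?thesis
    by (simp add: exp_minus field_simps)
qed

lemma ring_edge_exp_decay:
  fixes f :: "real^'n \<Rightarrow> real^'n" and A :: "real^'n^'n" and x :: "real \<Rightarrow> nat \<Rightarrow> real^'n"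
    and lam :: real
  assumes smooth: "smooth_map f"
    and contr: "\<forall>z. loewner_le (sym_part (Defs.jacobian f z) + sym_part A) (- lam *\<^sub>R mat 1)"
    and As_pd: "pd (sym_part A)"
    and cond: "psd (4 *\<^sub>R sym_part A - A ** matrix_inv (sym_part A) ** transpose A)"
    and ode: "\<forall>i<N. \<forall>t\<ge>0. ((\<lambda>s. x s i) has_vector_derivative
                 (f (x t i) + A *v (x t ((i + N - 1) mod N) - x t i))) (at t within {0..})"
  shows "\<exists>K\<ge>0. \<forall>i<N. \<forall>t\<ge>0. norm (ring_edge N (x t) i) \<le> K * exp (- lam * t)"
proof -
  define e where "e t = ring_edge N (x t)" for t
  define e' where "e' t i = f (x t i) - f (x t (Suc i mod N)) + A *v (e t ((i + N - 1) mod N) - e t i)"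
    for t i
  define V where "V t = (\<Sum>i<N. e t i \<bullet> e t i)" for t
  have V_deriv: "(V has_real_derivative (\<Sum>i<N. 2 * (e t i \<bullet> e' t i))) (at t within {0..})"
    if "t \<ge> 0" for t
    unfolding V_def e_def e'_def using ode that
    by (intro has_real_derivative_sum_inner_self ring_edge_has_vector_derivative) auto
  have V'_bound: "(\<Sum>i<N. 2 * (e t i \<bullet> e' t i)) \<le> - (2 * lam) * V t" for t
  proof -
    have "(\<Sum>i<N. e t i \<bullet> e' t i) \<le> - lam * V t"
      unfolding e'_def V_def
    proof (rule sum_inner_ring_coupling_le)
      show "e t i \<bullet> (f (x t i) - f (x t (Suc i mod N)))
          \<le> - lam * (e t i \<bullet> e t i) - e t i \<bullet> (sym_part A *v e t i)" for i
        unfolding e_def ring_edge_def by (rule inner_diff_le_of_contracting_jacobian[OF smooth contr])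
    qed (use inner_mv_le_sym_part_forms[OF As_pd cond] inner_sym_part_mv_self in auto)
    then show ?thesis
      by (simp add: sum_distrib_left[symmetric])
  qed
  have V_decay: "V t \<le> V 0 * exp (- (2 * lam) * t)" if "t \<ge> 0" for t
    using V_deriv V'_bound that by (rule le_exp_decay_of_derivative_le)
  have "norm (e t i) \<le> sqrt (V 0) * exp (- lam * t)" if "i < N" "t \<ge> 0" for i t
  proof (rule power2_le_imp_le)
    have "(norm (e t i))\<^sup>2 \<le> V t"
      unfolding V_def power2_norm_eq_inner using \<open>i < N\<close> by (intro member_le_sum) auto
    also have "\<dots> \<le> V 0 * exp (- (2 * lam) * t)"
      using \<open>t \<ge> 0\<close> by (rule V_decay)
    also have "\<dots> = (sqrt (V 0) * exp (- lam * t))\<^sup>2"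
      by (simp add: V_def power_mult_distrib sum_nonneg flip: exp_double)
    finally show "(norm (e t i))\<^sup>2 \<le> (sqrt (V 0) * exp (- lam * t))\<^sup>2" .
  qed (simp add: V_def sum_nonneg)
  then show ?thesis
    unfolding e_def by (intro exI[of _ "sqrt (V 0)"]) (simp add: V_def sum_nonneg)
qed

lemma norm_diff_le_of_steps:
  fixes y :: "nat \<Rightarrow> 'a::real_normed_vector"
  assumes step: "\<And>k. Suc k < N \<Longrightarrow> norm (y k - y (Suc k)) \<le> B"
    and "B \<ge> 0" "i < N" "j < N"
  shows "norm (y i - y j) \<le> real N * B"
proof -
  have chain: "norm (y i - y j) \<le> real (j - i) * B" if "i \<le> j" "j < N" for i j
    using that
  proof (induction j rule: dec_induct)
    case (step k)
    have "norm (y i - y (Suc k)) \<le> norm (y i - y k) + norm (y k - y (Suc k))"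
      by (rule norm_diff_triangle_le[of _ "y k"]) simp_all
    also have "\<dots> \<le> real (k - i) * B + B"
      using step by (intro add_mono assms(1)) auto
    finally show ?case
      using step by (simp add: algebra_simps)
  qed simp
  have "real (j - i) * B \<le> real N * B" "real (i - j) * B \<le> real N * B"
    using assms by (auto intro: mult_right_mono)
  then show ?thesis
    using chain[of i j] chain[of j i] assms by (cases "i \<le> j") (auto simp: norm_minus_commute)
qed

theorem theorem3p6:
  fixes f :: "real^'n \<Rightarrow> real^'n" and A :: "real^'n^'n" and N :: nat
    and lam :: real
  assumes smooth: "smooth_map f"
    and N2: "N \<ge> 2"
    and lam: "lam > 0"
    and contr: "\<forall>z. loewner_le (sym_part (jacobian f z) + sym_part A) (- lam *\<^sub>R mat 1)"
    and As_pd: "pd (sym_part A)"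
    and cond: "psd (4 *\<^sub>R sym_part A - A ** matrix_inv (sym_part A) ** transpose A)"
  shows "\<forall>x :: real \<Rightarrow> nat \<Rightarrow> real^'n.
           (\<forall>i<N. \<forall>t\<ge>0. ((\<lambda>s. x s i) has_vector_derivative
                 (f (x t i) + A *v (x t ((i + N - 1) mod N) - x t i))) (at t within {0..}))
           \<longrightarrow> (\<exists>M c. c > 0 \<and> (\<forall>i<N. \<forall>j<N. \<forall>t\<ge>0.
                   norm (x t i - x t j) \<le> M * exp (- c * t)))"
proof (intro allI impI)
  fix x :: "real \<Rightarrow> nat \<Rightarrow> real^'n"
  assume ode: "\<forall>i<N. \<forall>t\<ge>0. ((\<lambda>s. x s i) has_vector_derivative
                 (f (x t i) + A *v (x t ((i + N - 1) mod N) - x t i))) (at t within {0..})"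
  obtain K where "K \<ge> 0" and edge: "\<forall>i<N. \<forall>t\<ge>0. norm (ring_edge N (x t) i) \<le> K * exp (- lam * t)"
    using ring_edge_exp_decay[OF smooth contr As_pd cond ode] by blast
  have "norm (x t i - x t j) \<le> (real N * K) * exp (- lam * t)" if "i < N" "j < N" "t \<ge> 0" for i j t
  proof -
    have "norm (x t k - x t (Suc k)) \<le> K * exp (- lam * t)" if "Suc k < N" for k
      using edge \<open>t \<ge> 0\<close> that unfolding ring_edge_def by (metis Suc_lessD mod_less)
    then have "norm (x t i - x t j) \<le> real N * (K * exp (- lam * t))"
      using \<open>K \<ge> 0\<close> that by (intro norm_diff_le_of_steps) auto
    then show ?thesis
      by (simp add: mult.assoc)
  qed
  then show "\<exists>M c. c > 0 \<and> (\<forall>i<N. \<forall>j<N. \<forall>t\<ge>0. norm (x t i - x t j) \<le> M * exp (- c * t))"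
    using lam by blast
qed 

end
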